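(* Let $G$ be a group with normal subgroups $H_1$ and $H_2$ such that $H_1$ has order $2$, $G/H_1$ has exponent $2$, and $G/H_2\cong\mathbb{Z}/4\mathbb{Z}$. Then $G$ is abelian. *)

theory Defs
  imports "HOL-Algebra.Algebra"
begin

definition has_exponent :: "('a, 'b) monoid_scheme \<Rightarrow> nat \<Rightarrow> bool" where
  "has_exponent G n \<longleftrightarrow> 0 < n \<and> (\<forall>x\<in>carrier G. x [^]\<^bsub>G\<^esub> n = \<one>\<^bsub>G\<^esub>) \<and>
     (\<forall>m. 0 < m \<and> (\<forall>x\<in>carrier G. x [^]\<^bsub>G\<^esub> m = \<one>\<^bsub>G\<^esub>) \<longrightarrow> n \<le> m)"

end

theory Submission
  imports Defs
begin

text \<open>Every commutator lies in both H1 and H2, because both quotients are abelian: G/H1 has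
  exponent 2 and G/H2 is cyclic. If x maps to a generator of G/H2 \<cong> Z/4, then x^2 lies
  in H1 (exponent 2) but not in H2, so the nontrivial element of H1 is missing from H2 and
  H1 \<inter> H2 = {1}. Hence the derived subgroup is trivial.\<close>

lemma (in group) comm_group_if_exponent_two:
  assumes "has_exponent G 2"
  shows "comm_group G"
proof (rule group_comm_groupI)
  have self_inv: "inv z = z" if z: "z \<in> carrier G" for z
  proof (rule inv_equality)
    show "z \<otimes> z = \<one>"
      using assms z unfolding has_exponent_def by (simp add: numeral_2_eq_2)
  qed (use z in auto)
  fix x y assume x: "x \<in> carrier G" and y: "y \<in> carrier G"
  have "x \<otimes> y = inv (x \<otimes> y)" using x y by (simp add: self_inv)
  also have "\<dots> = inv y \<otimes> inv x" using x y by (simp add: inv_mult_group)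
  also have "\<dots> = y \<otimes> x" using x y by (simp add: self_inv)
  finally show "x \<otimes> y = y \<otimes> x" .
qed

lemma (in group) comm_group_if_derived_trivial:
  assumes "derived G (carrier G) \<subseteq> {\<one>}"
  shows "comm_group G"
proof (rule group_comm_groupI)
  fix x y assume x: "x \<in> carrier G" and y: "y \<in> carrier G"
  have "x \<otimes> y \<otimes> inv x \<otimes> inv y \<in> derived G (carrier G)"
    unfolding derived_def using x y by (blast intro: generate.incl)
  then have "x \<otimes> y \<otimes> inv x \<otimes> inv y = \<one>" using assms by blast
  then show "x \<otimes> y = y \<otimes> x"
    using x y by (metis inv_closed inv_inv inv_solve_right inv_equality m_closed)
qed

lemma (in normal) FactGroup_pow_eq_one_iff:
  assumes "x \<in> carrier G"
  shows "(H #> x) [^]\<^bsub>G Mod H\<^esub> (n::nat) = H \<longleftrightarrow> x [^] n \<in> H"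
proof -
  have "(H #> x) [^]\<^bsub>G Mod H\<^esub> n = H #> (x [^] n)"
    using hom_nat_pow[OF r_coset_hom_Mod assms is_group factorgroup_is_group] by simp
  then show ?thesis
    using assms coset_join1 rcos_const is_group subgroup_axioms by auto
qed

lemma iso_integer_mod_group_pow_ne_one:
  assumes "group K" "K \<cong> integer_mod_group n" "0 < m" "m < n"
  shows "\<exists>y \<in> carrier K. y [^]\<^bsub>K\<^esub> m \<noteq> \<one>\<^bsub>K\<^esub>"
proof -
  obtain \<psi> where "\<psi> \<in> iso (integer_mod_group n) K"
    using group.iso_sym[OF assms(1,2)] unfolding is_iso_def by blast
  then have hom: "\<psi> \<in> hom (integer_mod_group n) K"
    and inj: "inj_on \<psi> (carrier (integer_mod_group n))"
    by (auto simp: iso_iff)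
  have carrier: "1 \<in> carrier (integer_mod_group n)" "int m \<in> carrier (integer_mod_group n)"
    using assms(3,4) by (auto simp: carrier_integer_mod_group)
  have "\<psi> 1 [^]\<^bsub>K\<^esub> m = \<psi> (int m)"
    using hom_nat_pow[OF hom carrier(1) group_integer_mod_group assms(1), of m] assms(4) by simp
  also have "\<dots> \<noteq> \<psi> 0"
    using inj_onD[OF inj _ carrier(2)] assms(3) by fastforce
  also have "\<psi> 0 = \<one>\<^bsub>K\<^esub>"
    using hom_one[OF hom group_integer_mod_group assms(1)] by simp
  finally show ?thesis
    using hom carrier(1) unfolding hom_def by blast
qed

lemma (in group) subgroup_inter_eq_one_if_card_two:
  assumes "subgroup H G" "subgroup K G" "card H = 2" "\<not> H \<subseteq> K"
  shows "H \<inter> K = {\<one>}"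
proof -
  have "\<one> \<in> H" using assms(1) subgroup.one_closed by blast
  then obtain h where "H = {\<one>, h}"
    using assms(3) card_2_iff[of H] by (metis insertE insert_commute singleton_iff)
  then show ?thesis using assms(2,4) subgroup.one_closed by blast
qed

theorem lemma4p1:
  fixes G (structure)
  assumes "group G"
    and "H1 \<lhd> G" and "H2 \<lhd> G"
    and "finite H1" and "card H1 = 2"
    and "has_exponent (G Mod H1) 2"
    and "G Mod H2 \<cong> integer_mod_group 4"
  shows "comm_group G"
proof -
  interpret group G by fact
  interpret N1: normal H1 G by fact
  interpret N2: normal H2 G by fact
  have comm1: "comm_group (G Mod H1)"
    using group.comm_group_if_exponent_two[OF N1.factorgroup_is_group assms(6)] .
  have comm2: "comm_group (G Mod H2)"
    using comm_group.iso_imp_comm_group[OF abelian_integer_mod_group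
        group.iso_sym[OF N2.factorgroup_is_group assms(7)]]
      N2.factorgroup_is_group group.is_monoid by blast
  obtain x where x: "x \<in> carrier G" "x [^] (2::nat) \<notin> H2"
    using iso_integer_mod_group_pow_ne_one[OF N2.factorgroup_is_group assms(7), of 2]
    by (auto simp: carrier_FactGroup N2.FactGroup_pow_eq_one_iff)
  have "x [^] (2::nat) \<in> H1"
    using assms(6) x(1) unfolding has_exponent_def
    by (auto simp: carrier_FactGroup N1.FactGroup_pow_eq_one_iff[symmetric])
  then have "H1 \<inter> H2 = {\<one>}"
    using subgroup_inter_eq_one_if_card_two[OF N1.subgroup_axioms N2.subgroup_axioms assms(5)] x(2)
    by blast
  moreover have "derived G (carrier G) \<subseteq> H1 \<inter> H2"
    using derived_minimal[OF assms(2) comm1] derived_minimal[OF assms(3) comm2] by blast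
  ultimately show ?thesis
    by (simp add: comm_group_if_derived_trivial)
qed

end
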